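(* Let $D=(N,A)$, $\mathcal{K}$, $\{D^k\}_{k\in\mathcal{K}}$ be an instance of SND-RR with time horizon $T$, $\mathcal{A}$ a valid arc partition, $G=G(D,\mathcal{A})=(V,E)$ the auxiliary flat network, and $G_S=(V_S,E_S\cup F_S)$ a partial network of $G$ satisfying properties (P1$'$) and (P2$'$) below. Then the optimal value of SND-RR$(G_S)$ is a lower bound on the optimal value of SND-RR$(G_T)$. (P1$'$) For all $k\in\mathcal{K}$, $(o'_k,r_k)\in V_S$ and $(d^0_k,l_k)\in V_S$; for all $v\in N$, $(v^0,T)\in V_S$ and $(u,0)\in V_S$ for all $u\in\mathcal{V}(v)$. (P2$'$) For all $xz\in E$ and all $(x,t)\in V_S$ with $t+\tau_{xz}\le T$, we have $((x,t),(z,t'))\in E_S$ where $t'=\max\{r: r\le t+\tau_{xz},\ (z,r)\in V_S\}$.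
   Context: An instance of SND-RR consists of: a directed graph $D=(N,A)$; for each $vw\in A$ a transit time $\tau_{vw}\in\mathbb{Z}_{>0}$, fixed cost $f_{vw}>0$, capacity $u_{vw}\in\mathbb{Z}_{>0}$, per-unit cost $c^k_{vw}>0$ for each commodity $k$; commodities $\mathcal{K}$, each with origin $o_k$, destination $d_k$, demand $q_k$, release time $r_k$, deadline $l_k$ (integers, earliest release $0$); subgraphs $D^k=(N^k,A^k)\subseteq D$ with $\delta^+_{D^k}(d_k)=\emptyset$ and $\delta^+_{D^k}(v)\ne\emptyset$ for $v\in N^k\setminus\{d_k\}$. $T=\max_kl_k$, $[T]=\{0,\dots,T\}$. For a timed arc $a=((v,t),(w,t'))$ with underlying arc $vw$: $u_a=u_{vw}$, $f_a=f_{vw}$, $c^k_a=c^k_{vw}$, $\tau_a=\tau_{vw}$ (not $t'-t$). $x^k(S)=\sum_{a\in S}x^k_a$; $\delta^\pm_H(v,t)$ are outgoing/incoming timed arcs in $H$. Valid partition: $\mathcal{A}=\{\mathcal{A}_v\}_{v\in N}$, each $\mathcal{A}_v$ a partition of $\delta^+_D(v)$, such that for each $k$, $\delta^+_{D^k}(v)\subseteq A_i$ for some $A_i\in\mathcal{A}_v$. Auxiliary network $G=(V,E)$: $\mathcal{V}(v)=\{v^0,\dots,v^{|\mathcal{A}_v|}\}$ (copy $v^i$ per part $A_i\in\mathcal{A}_v$, terminal copy $v^0$), $V=\bigcup_v\mathcal{V}(v)$, $E=\{v^iw^j:vw\in A_i\in\mathcal{A}_v,w^j\in\mathcal{V}(w)\}$,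 each $v^iw^j$ with the transit time and costs of $vw$. With $\mathcal{K}(A_i)=\{k:\emptyset\ne\delta^+_{D^k}(v)\subseteq A_i\}$: $G^k=(V^k,E^k)$, $V^k=\{v^i:v\in N^k,A_i\in\mathcal{A}_v,k\in\mathcal{K}(A_i)\}\cup\{d^0_k\}$, $E^k=\{v^iw^j:vw\in A^k,v^i,w^j\in V^k\}$; $o'_k$ is the unique copy of $o_k$ in $V^k$. Full time-expanded network of $G$: $G_T=(V_T,E_T\cup F_T)$ with $V_T=V\times[T]$, movement arcs $((x,t),(z,t+\tau_{xz}))$ for $xz\in E$, $t+\tau_{xz}\le T$, holdover arcs $((x,t),(x,t+1))$; similarly $G^k_T=(V^k_T,E^k_T\cup F^k_T)$, and $D_T=(N_T,A_T\cup H_T)$ for $D$. For $a=((v,t),(w,t'))\in A_T$, $\mathcal{E}_T(a)=\{((v^i,t),(w^j,t')):vw\in A_i\in\mathcal{A}_v,w^j\in\mathcal{V}(w)\}$. SND-RR$(G_T)$: minimize $\sum_{a\in A_T}f_ay_a+\sum_k\sum_{e\in E_T}c^k_eq_kx^k_e$ s.t. for all $k$, $(x,t)\in V^k_T$: $x^k(\delta^+_{G^k_T}(x,t))-x^k(\delta^-_{G^k_T}(x,t))$ is $1$ at $(o'_k,r_k)$, $-1$ at $(d^0_k,l_k)$, $0$ otherwise; $\sum_k\sum_{e\in\mathcal{E}_T(a)}q_kx^k_e\le u_ay_a$ for $a\in A_T$; $x^k_e\in\{0,1\}$ for $e\in E^k_T\cup F^k_T$ ($0$ otherwise); $y_a\in\mathbb{Z}_{\ge0}$.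 A partial network of $G$ is $G_S=(V_S,E_S\cup F_S)$ with $V_S\subseteq V_T$, $E_S\subseteq\{((x,t),(z,t')):(x,t)\in V_T,xz\in E,t'\le t+\tau_{xz}\le T\}$, and $F_S$ the holdover arcs joining each $(x,t)\in V_S$ to the next copy of $x$ in $V_S$. $G^k_S=(V^k_S,E^k_S\cup F^k_S)$: $V^k_S=\{(x,t)\in V_S:x\in V^k\}$, $E^k_S=\{((x,t),(z,t'))\in E_S:xz\in E^k\}$, $F^k_S$ the arcs of $F_S$ on copies of nodes of $V^k$. The associated partial network of $D$ is $D_S(G_S)=(N_S,A_S\cup H_S)$ with $N_S=\{(v,t):(u,t)\in V_S\text{ for some }u\in\mathcal{V}(v)\}$ and $A_S=\{((v,t),(w,t')):(v,t)\in N_S,vw\in A,t+\tau_{vw}\le T,t'=\max\{r:r\le t+\tau_{vw},(w,r)\in N_S\}\}$. For $a=((v,t),(w,t'))\in A_S$, $\mathcal{E}_S(a)=\{((v^i,t),(w^j,t''))\in E_S: w^j\in\mathcal{V}(w), vw\in A_i\in\mathcal{A}_v\}$. SND-RR$(G_S)$: minimize $\sum_{a\in A_S}f_ay_a+\sum_k\sum_{e\in E_S}c^k_eq_kx^k_e$ s.t. for all $k$, $(x,t)\in V^k_S$: $x^k(\delta^+_{G^k_S}(x,t))-x^k(\delta^-_{G^k_S}(x,t))$ is $1$ at $(o'_k,r_k)$, $-1$ at $(d^0_k,l_k)$, $0$ otherwise; $\sum_k\sum_{e\in\mathcal{E}_S(a)}q_kx^k_e\le u_ay_a$ for all $a\in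 A_S$; $\sum_{e\in E^k_S}\tau_ex^k_e\le l_k-r_k$ for all $k$; $x^k_e\in\{0,1\}$ for $e\in E^k_S\cup F^k_S$ ($0$ otherwise); $y_a\in\mathbb{Z}_{\ge0}$ for $a\in A_S$. *)

theory Defs
  imports Main "HOL-Library.Disjoint_Sets" "HOL-Library.Extended_Real"
begin

record ('n, 'k) sndrr =
  nodes :: "'n set"
  arcs  :: "('n \<times> 'n) set"
  tau   :: "'n \<times> 'n \<Rightarrow> nat"
  fcost :: "'n \<times> 'n \<Rightarrow> real"
  cap   :: "'n \<times> 'n \<Rightarrow> nat"
  ucost :: "'k \<Rightarrow> 'n \<times> 'n \<Rightarrow> real"
  comms :: "'k set"
  orig  :: "'k \<Rightarrow> 'n"
  dest  :: "'k \<Rightarrow> 'n"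
  dem   :: "'k \<Rightarrow> nat"
  rel   :: "'k \<Rightarrow> nat"
  dl    :: "'k \<Rightarrow> nat"
  subN  :: "'k \<Rightarrow> 'n set"
  subA  :: "'k \<Rightarrow> ('n \<times> 'n) set"

definition outarcs :: "('n \<times> 'n) set \<Rightarrow> 'n \<Rightarrow> ('n \<times> 'n) set" where
  "outarcs B v = {a \<in> B. fst a = v}"

definition snd_instance :: "('n, 'k, 'z) sndrr_scheme \<Rightarrow> bool" where
  "snd_instance I \<longleftrightarrow>
     finite (nodes I) \<and> arcs I \<subseteq> nodes I \<times> nodes I \<and> finite (comms I) \<and>
     (\<forall>a\<in>arcs I. tau I a > 0 \<and> fcost I a > 0 \<and> cap I a > 0 \<and> (\<forall>k\<in>comms I. ucost I k a > 0)) \<and>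
     (\<forall>k\<in>comms I. orig I k \<in> subN I k \<and> dest I k \<in> subN I k \<and> subN I k \<subseteq> nodes I \<and>
        subA I k \<subseteq> arcs I \<and> subA I k \<subseteq> subN I k \<times> subN I k \<and>
        outarcs (subA I k) (dest I k) = {} \<and>
        (\<forall>v \<in> subN I k - {dest I k}. outarcs (subA I k) v \<noteq> {})) \<and>
     (\<exists>k\<in>comms I. rel I k = 0)"

definition horizon :: "('n, 'k, 'z) sndrr_scheme \<Rightarrow> nat" where
  "horizon I = Max (dl I ` comms I)"

section \<open>Valid partitions and the auxiliary network G\<close>

text \<open>A partition P assigns to each node v the set of parts of its out-arcs.
  Copies of v: the terminal copy (v, None) and (v, Some X) for each part X.\<close>

type_synonym 'n part = "'n \<Rightarrow> ('n \<times> 'n) set set"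
type_synonym 'n gnode = "'n \<times> ('n \<times> 'n) set option"
type_synonym 'n tnode = "'n gnode \<times> nat"
type_synonym 'n tarc = "'n tnode \<times> 'n tnode"
type_synonym 'n darc = "('n \<times> nat) \<times> ('n \<times> nat)"

definition valid_partition :: "('n, 'k, 'z) sndrr_scheme \<Rightarrow> 'n part \<Rightarrow> bool" where
  "valid_partition I P \<longleftrightarrow>
     (\<forall>v\<in>nodes I. partition_on (outarcs (arcs I) v) (P v)) \<and>
     (\<forall>k\<in>comms I. \<forall>v\<in>nodes I. outarcs (subA I k) v \<noteq> {} \<longrightarrow>
        (\<exists>X\<in>P v. outarcs (subA I k) v \<subseteq> X))"

definition copies :: "'n part \<Rightarrow> 'n \<Rightarrow> 'n gnode set" where
  "copies P v = insert (v, None) ((\<lambda>X. (v, Some X)) ` P v)"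

definition Vaux :: "('n, 'k, 'z) sndrr_scheme \<Rightarrow> 'n part \<Rightarrow> 'n gnode set" where
  "Vaux I P = (\<Union>v\<in>nodes I. copies P v)"

definition Eaux :: "('n, 'k, 'z) sndrr_scheme \<Rightarrow> 'n part \<Rightarrow> ('n gnode \<times> 'n gnode) set" where
  "Eaux I P = {((v, Some X), z) | v X z. v \<in> nodes I \<and> X \<in> P v \<and>
                 (v, fst z) \<in> X \<and> z \<in> copies P (fst z)}"

definition gtau :: "('n, 'k, 'z) sndrr_scheme \<Rightarrow> 'n gnode \<times> 'n gnode \<Rightarrow> nat" where
  "gtau I e = tau I (fst (fst e), fst (snd e))"

definition uarc :: "'n tarc \<Rightarrow> 'n \<times> 'n" where
  "uarc e = (fst (fst (fst e)), fst (fst (snd e)))"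

definition Kpart :: "('n, 'k, 'z) sndrr_scheme \<Rightarrow> 'n \<Rightarrow> ('n \<times> 'n) set \<Rightarrow> 'k set" where
  "Kpart I v X = {k \<in> comms I. outarcs (subA I k) v \<noteq> {} \<and> outarcs (subA I k) v \<subseteq> X}"

definition Vk :: "('n, 'k, 'z) sndrr_scheme \<Rightarrow> 'n part \<Rightarrow> 'k \<Rightarrow> 'n gnode set" where
  "Vk I P k = {(v, Some X) | v X. v \<in> subN I k \<and> X \<in> P v \<and> k \<in> Kpart I v X}
              \<union> {(dest I k, None)}"

definition Ek :: "('n, 'k, 'z) sndrr_scheme \<Rightarrow> 'n part \<Rightarrow> 'k \<Rightarrow> ('n gnode \<times> 'n gnode) set" where
  "Ek I P k = {(x, z) \<in> Eaux I P. (fst x, fst z) \<in> subA I k \<and> x \<in> Vk I P k \<and> z \<in> Vk I P k}"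

text \<open>o'_k: the unique copy of o_k in V^k.\<close>
definition origc :: "('n, 'k, 'z) sndrr_scheme \<Rightarrow> 'n part \<Rightarrow> 'k \<Rightarrow> 'n gnode" where
  "origc I P k = (THE x. x \<in> Vk I P k \<and> fst x = orig I k)"

definition outflow :: "'n tarc set \<Rightarrow> 'n tarc set \<Rightarrow> ('n tarc \<Rightarrow> real) \<Rightarrow> ('n tarc \<Rightarrow> real)
                        \<Rightarrow> 'n tnode \<Rightarrow> real" where
  "outflow Em Fh xm xh p = (\<Sum>e\<in>{e\<in>Em. fst e = p}. xm e) + (\<Sum>e\<in>{e\<in>Fh. fst e = p}. xh e)"

definition inflow :: "'n tarc set \<Rightarrow> 'n tarc set \<Rightarrow> ('n tarc \<Rightarrow> real) \<Rightarrow> ('n tarc \<Rightarrow> real)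
                        \<Rightarrow> 'n tnode \<Rightarrow> real" where
  "inflow Em Fh xm xh p = (\<Sum>e\<in>{e\<in>Em. snd e = p}. xm e) + (\<Sum>e\<in>{e\<in>Fh. snd e = p}. xh e)"

definition flowrhs :: "('n, 'k, 'z) sndrr_scheme \<Rightarrow> 'n part \<Rightarrow> 'k \<Rightarrow> 'n tnode \<Rightarrow> real" where
  "flowrhs I P k p = (if p = (origc I P k, rel I k) then 1 else 0)
                  - (if p = ((dest I k, None), dl I k) then 1 else 0)"

text \<open>A solution: flow variables on movement arcs, flow variables on holdover arcs
  (kept apart, since these are different arcs), and integer design variables on timed arcs of D.\<close>
type_synonym ('n, 'k) sol = "('k \<Rightarrow> 'n tarc \<Rightarrow> real) \<times> ('k \<Rightarrow> 'n tarc \<Rightarrow> real) \<times> ('n darc \<Rightarrow> nat)"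

section \<open>The full time-expanded network G_T and SND-RR(G_T)\<close>

definition VT :: "('n, 'k, 'z) sndrr_scheme \<Rightarrow> 'n part \<Rightarrow> 'n tnode set" where
  "VT I P = Vaux I P \<times> {0..horizon I}"

definition ET :: "('n, 'k, 'z) sndrr_scheme \<Rightarrow> 'n part \<Rightarrow> 'n tarc set" where
  "ET I P = {((x, t), (z, t + gtau I (x, z))) | x z t.
               (x, z) \<in> Eaux I P \<and> t + gtau I (x, z) \<le> horizon I}"

definition FT :: "('n, 'k, 'z) sndrr_scheme \<Rightarrow> 'n part \<Rightarrow> 'n tarc set" where
  "FT I P = {((x, t), (x, t + 1)) | x t. x \<in> Vaux I P \<and> t + 1 \<le> horizon I}"

definition VkT :: "('n, 'k, 'z) sndrr_scheme \<Rightarrow> 'n part \<Rightarrow> 'k \<Rightarrow> 'n tnode set" where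
  "VkT I P k = Vk I P k \<times> {0..horizon I}"

definition EkT :: "('n, 'k, 'z) sndrr_scheme \<Rightarrow> 'n part \<Rightarrow> 'k \<Rightarrow> 'n tarc set" where
  "EkT I P k = {((x, t), (z, t + gtau I (x, z))) | x z t.
               (x, z) \<in> Ek I P k \<and> t + gtau I (x, z) \<le> horizon I}"

definition FkT :: "('n, 'k, 'z) sndrr_scheme \<Rightarrow> 'n part \<Rightarrow> 'k \<Rightarrow> 'n tarc set" where
  "FkT I P k = {((x, t), (x, t + 1)) | x t. x \<in> Vk I P k \<and> t + 1 \<le> horizon I}"

definition AT :: "('n, 'k, 'z) sndrr_scheme \<Rightarrow> 'n darc set" where
  "AT I = {((v, t), (w, t + tau I (v, w))) | v w t.
             (v, w) \<in> arcs I \<and> t + tau I (v, w) \<le> horizon I}"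

definition calET :: "'n part \<Rightarrow> 'n darc \<Rightarrow> 'n tarc set" where
  "calET P a = (case a of ((v, t), (w, t')) \<Rightarrow>
      {(((v, Some X), t), (z, t')) | X z. X \<in> P v \<and> (v, w) \<in> X \<and> z \<in> copies P w})"

definition feasible_T :: "('n, 'k, 'z) sndrr_scheme \<Rightarrow> 'n part \<Rightarrow> ('n, 'k) sol \<Rightarrow> bool" where
  "feasible_T I P s = (case s of (xm, xh, y) \<Rightarrow>
     (\<forall>k\<in>comms I. \<forall>p\<in>VkT I P k.
        outflow (EkT I P k) (FkT I P k) (xm k) (xh k) p
        - inflow (EkT I P k) (FkT I P k) (xm k) (xh k) p = flowrhs I P k p) \<and>
     (\<forall>a\<in>AT I. (\<Sum>k\<in>comms I. \<Sum>e\<in>calET P a. real (dem I k) * xm k e) \<le> real (cap I (fst (fst a), fst (snd a))) * real (y a)) \<and>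
     (\<forall>k\<in>comms I. \<forall>e.
        (e \<in> EkT I P k \<longrightarrow> xm k e \<in> {0, 1}) \<and> (e \<notin> EkT I P k \<longrightarrow> xm k e = 0) \<and>
        (e \<in> FkT I P k \<longrightarrow> xh k e \<in> {0, 1}) \<and> (e \<notin> FkT I P k \<longrightarrow> xh k e = 0)))"

definition cost_T :: "('n, 'k, 'z) sndrr_scheme \<Rightarrow> 'n part \<Rightarrow> ('n, 'k) sol \<Rightarrow> real" where
  "cost_T I P s = (case s of (xm, xh, y) \<Rightarrow>
     (\<Sum>a\<in>AT I. fcost I (fst (fst a), fst (snd a)) * real (y a))
     + (\<Sum>k\<in>comms I. \<Sum>e\<in>ET I P. ucost I k (uarc e) * real (dem I k) * xm k e))"

definition opt_T :: "('n, 'k, 'z) sndrr_scheme \<Rightarrow> 'n part \<Rightarrow> ereal" where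
  "opt_T I P = (INF s\<in>{s. feasible_T I P s}. ereal (cost_T I P s))"

section \<open>Partial networks G_S and SND-RR(G_S)\<close>

definition partial_network ::
  "('n, 'k, 'z) sndrr_scheme \<Rightarrow> 'n part \<Rightarrow> 'n tnode set \<Rightarrow> 'n tarc set \<Rightarrow> bool" where
  "partial_network I P VS ES \<longleftrightarrow> VS \<subseteq> VT I P \<and>
     ES \<subseteq> {((x, t), (z, t')) | x z t t'. (x, t) \<in> VT I P \<and> (x, z) \<in> Eaux I P \<and>
                t' \<le> t + gtau I (x, z) \<and> t + gtau I (x, z) \<le> horizon I}"

definition FS :: "'n tnode set \<Rightarrow> 'n tarc set" where
  "FS VS = {((x, t), (x, t')) | x t t'. (x, t) \<in> VS \<and> (x, t') \<in> VS \<and> t < t' \<and>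
              (\<forall>s. t < s \<and> s < t' \<longrightarrow> (x, s) \<notin> VS)}"

definition VkS :: "('n, 'k, 'z) sndrr_scheme \<Rightarrow> 'n part \<Rightarrow> 'n tnode set \<Rightarrow> 'k \<Rightarrow> 'n tnode set" where
  "VkS I P VS k = {p \<in> VS. fst p \<in> Vk I P k}"

definition EkS :: "('n, 'k, 'z) sndrr_scheme \<Rightarrow> 'n part \<Rightarrow> 'n tarc set \<Rightarrow> 'k \<Rightarrow> 'n tarc set" where
  "EkS I P ES k = {e \<in> ES. (fst (fst e), fst (snd e)) \<in> Ek I P k}"

definition FkS :: "('n, 'k, 'z) sndrr_scheme \<Rightarrow> 'n part \<Rightarrow> 'n tnode set \<Rightarrow> 'k \<Rightarrow> 'n tarc set" where
  "FkS I P VS k = {e \<in> FS VS. fst (fst e) \<in> Vk I P k}"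

definition latest :: "('a \<times> nat) set \<Rightarrow> 'a \<Rightarrow> nat \<Rightarrow> nat \<Rightarrow> bool" where
  "latest S z b t' \<longleftrightarrow> (z, t') \<in> S \<and> t' \<le> b \<and> (\<forall>r. (z, r) \<in> S \<and> r \<le> b \<longrightarrow> r \<le> t')"

definition NS :: "('n, 'k, 'z) sndrr_scheme \<Rightarrow> 'n part \<Rightarrow> 'n tnode set \<Rightarrow> ('n \<times> nat) set" where
  "NS I P VS = {(v, t) | v t. v \<in> nodes I \<and> (\<exists>u\<in>copies P v. (u, t) \<in> VS)}"

definition AS :: "('n, 'k, 'z) sndrr_scheme \<Rightarrow> 'n part \<Rightarrow> 'n tnode set \<Rightarrow> 'n darc set" where
  "AS I P VS = {((v, t), (w, t')) | v w t t'. (v, t) \<in> NS I P VS \<and> (v, w) \<in> arcs I \<and>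
                  t + tau I (v, w) \<le> horizon I \<and> latest (NS I P VS) w (t + tau I (v, w)) t'}"

definition calES :: "'n part \<Rightarrow> 'n tarc set \<Rightarrow> 'n darc \<Rightarrow> 'n tarc set" where
  "calES P ES a = (case a of ((v, t), (w, t')) \<Rightarrow>
      {e \<in> ES. \<exists>X z t''. e = (((v, Some X), t), (z, t'')) \<and> X \<in> P v \<and> (v, w) \<in> X \<and> z \<in> copies P w})"

definition feasible_S ::
  "('n, 'k, 'z) sndrr_scheme \<Rightarrow> 'n part \<Rightarrow> 'n tnode set \<Rightarrow> 'n tarc set \<Rightarrow> ('n, 'k) sol \<Rightarrow> bool" where
  "feasible_S I P VS ES s = (case s of (xm, xh, y) \<Rightarrow>
     (\<forall>k\<in>comms I. \<forall>p\<in>VkS I P VS k.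
        outflow (EkS I P ES k) (FkS I P VS k) (xm k) (xh k) p
        - inflow (EkS I P ES k) (FkS I P VS k) (xm k) (xh k) p = flowrhs I P k p) \<and>
     (\<forall>a\<in>AS I P VS. (\<Sum>k\<in>comms I. \<Sum>e\<in>calES P ES a. real (dem I k) * xm k e)
                       \<le> real (cap I (fst (fst a), fst (snd a))) * real (y a)) \<and>
     (\<forall>k\<in>comms I. (\<Sum>e\<in>EkS I P ES k. real (tau I (uarc e)) * xm k e) \<le> real (dl I k) - real (rel I k)) \<and>
     (\<forall>k\<in>comms I. \<forall>e.
        (e \<in> EkS I P ES k \<longrightarrow> xm k e \<in> {0, 1}) \<and> (e \<notin> EkS I P ES k \<longrightarrow> xm k e = 0) \<and>
        (e \<in> FkS I P VS k \<longrightarrow> xh k e \<in> {0, 1}) \<and> (e \<notin> FkS I P VS k \<longrightarrow> xh k e = 0)))"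

definition cost_S ::
  "('n, 'k, 'z) sndrr_scheme \<Rightarrow> 'n part \<Rightarrow> 'n tnode set \<Rightarrow> 'n tarc set \<Rightarrow> ('n, 'k) sol \<Rightarrow> real" where
  "cost_S I P VS ES s = (case s of (xm, xh, y) \<Rightarrow>
     (\<Sum>a\<in>AS I P VS. fcost I (fst (fst a), fst (snd a)) * real (y a))
     + (\<Sum>k\<in>comms I. \<Sum>e\<in>ES. ucost I k (uarc e) * real (dem I k) * xm k e))"

definition opt_S :: "('n, 'k, 'z) sndrr_scheme \<Rightarrow> 'n part \<Rightarrow> 'n tnode set \<Rightarrow> 'n tarc set \<Rightarrow> ereal" where
  "opt_S I P VS ES = (INF s\<in>{s. feasible_S I P VS ES s}. ereal (cost_S I P VS ES s))"

definition P1' :: "('n, 'k, 'z) sndrr_scheme \<Rightarrow> 'n part \<Rightarrow> 'n tnode set \<Rightarrow> bool" where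
  "P1' I P VS \<longleftrightarrow>
     (\<forall>k\<in>comms I. (origc I P k, rel I k) \<in> VS \<and> ((dest I k, None), dl I k) \<in> VS) \<and>
     (\<forall>v\<in>nodes I. ((v, None), horizon I) \<in> VS \<and> (\<forall>u\<in>copies P v. (u, 0) \<in> VS))"

definition P2' :: "('n, 'k, 'z) sndrr_scheme \<Rightarrow> 'n part \<Rightarrow> 'n tnode set \<Rightarrow> 'n tarc set \<Rightarrow> bool" where
  "P2' I P VS ES \<longleftrightarrow>
     (\<forall>(x, z)\<in>Eaux I P. \<forall>t t'. (x, t) \<in> VS \<and> t + gtau I (x, z) \<le> horizon I \<and>
        latest VS z (t + gtau I (x, z)) t' \<longrightarrow> ((x, t), (z, t')) \<in> ES)"

end

theory Submission
  imports Defs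
begin

text \<open>Since every arc of G_T goes forward in time,
  the binary flow of commodity k contains a walk from (o'_k, r_k) to (d^0_k, l_k) through arcs
  of value 1. Round every time down to the latest copy of the node in V_S, which exists by
  (P1'): a movement arc becomes the arc of E_S supplied by (P2'), followed by holdover arcs of
  F_S, and a holdover arc becomes a chain of holdover arcs. Shortcutting the rounded walk gives
  a path of G^k_S, whose indicator vector satisfies flow conservation; its movement arcs are
  roundings of arcs of the original walk, whose transit times add up to at most l_k - r_k.
  An arc a of A_S receives the design value summed over the arcs of A_T rounding to a; these
  fibres are disjoint, so capacities are respected and neither fixed nor flow costs increase.\<close>

section \<open>Labelled walks\<close>

text \<open>An arc is a triple (l, u, v) from u to v with a label l. The label keeps apart parallel
  arcs of different kinds: below, True marks movement arcs and False holdover arcs.\<close>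
fun is_walk :: "'a \<Rightarrow> ('l \<times> 'a \<times> 'a) list \<Rightarrow> 'a \<Rightarrow> bool" where
  "is_walk s [] t \<longleftrightarrow> s = t"
| "is_walk s (a # W) t \<longleftrightarrow> fst (snd a) = s \<and> is_walk (snd (snd a)) W t"

abbreviation walk_nodes :: "'a \<Rightarrow> ('l \<times> 'a \<times> 'a) list \<Rightarrow> 'a list" where
  "walk_nodes s W \<equiv> s # map (\<lambda>a. snd (snd a)) W"

lemma is_walk_append: "is_walk s (V @ W) t \<longleftrightarrow> (\<exists>m. is_walk s V m \<and> is_walk m W t)"
  by (induction V arbitrary: s) auto

lemma is_walk_tail_in_nodes: "is_walk s W t \<Longrightarrow> a \<in> set W \<Longrightarrow> fst (snd a) \<in> set (walk_nodes s W)"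
  by (induction W arbitrary: s) auto

lemma is_walk_suffix:
  "is_walk q W t \<Longrightarrow> distinct (walk_nodes q W) \<Longrightarrow> s \<in> set (walk_nodes q W) \<Longrightarrow>
   \<exists>V. set V \<subseteq> set W \<and> is_walk s V t \<and> distinct (walk_nodes s V)"
proof (induction W arbitrary: q)
  case (Cons a W)
  show ?case
  proof (cases "s = q")
    case True
    then show ?thesis using Cons.prems by blast
  next
    case False
    then show ?thesis using Cons.prems Cons.IH[of "snd (snd a)"] by auto
  qed
qed auto

lemma is_walk_shortcut:
  "is_walk s W t \<Longrightarrow> \<exists>V. set V \<subseteq> set W \<and> is_walk s V t \<and> distinct (walk_nodes s V)"
proof (induction W arbitrary: s)
  case (Cons a W)
  then have "is_walk (snd (snd a)) W t" by simp
  then obtain V where V: "set V \<subseteq> set W" "is_walk (snd (snd a)) V t"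
      "distinct (walk_nodes (snd (snd a)) V)"
    using Cons.IH by blast
  show ?case
  proof (cases "s \<in> set (walk_nodes (snd (snd a)) V)")
    case True
    then show ?thesis using is_walk_suffix[OF V(2,3) True] V(1) by auto
  next
    case False
    then show ?thesis using V Cons.prems by (intro exI[of _ "a # V"]) auto
  qed
qed auto

lemma is_walk_subdivide:
  assumes "is_walk s W t"
    and "\<And>a. a \<in> set W \<Longrightarrow>
           \<exists>V. is_walk (f (fst (snd a))) V (f (snd (snd a))) \<and> set V \<subseteq> F a"
  shows "\<exists>V. is_walk (f s) V (f t) \<and> set V \<subseteq> (\<Union>a\<in>set W. F a)"
  using assms
proof (induction W arbitrary: s)
  case (Cons a W)
  have walk: "fst (snd a) = s" "is_walk (snd (snd a)) W t" using Cons.prems(1) by simp_all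
  have "\<exists>V. is_walk (f (fst (snd a))) V (f (snd (snd a))) \<and> set V \<subseteq> F a"
    by (rule Cons.prems(2)) simp
  then obtain V1 where V1: "is_walk (f s) V1 (f (snd (snd a)))" "set V1 \<subseteq> F a"
    using walk(1) by blast
  have "\<exists>V. is_walk (f (snd (snd a))) V (f t) \<and> set V \<subseteq> (\<Union>a\<in>set W. F a)"
    by (rule Cons.IH[OF walk(2)]) (simp add: Cons.prems(2))
  then obtain V2 where V2: "is_walk (f (snd (snd a))) V2 (f t)" "set V2 \<subseteq> (\<Union>a\<in>set W. F a)"
    by blast
  have "is_walk (f s) (V1 @ V2) (f t)" unfolding is_walk_append using V1(1) V2(1) by blast
  moreover have "set (V1 @ V2) \<subseteq> (\<Union>b\<in>set (a # W). F b)" using V1(2) V2(2) by auto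
  ultimately show ?case by blast
qed simp

lemma finite_labelled: "finite {e. (l, e) \<in> set W}"
  by (rule finite_subset[of _ "snd ` set W"]) (auto intro: rev_image_eqI)

lemma path_tails_minus_heads:
  assumes "is_walk s W t" "distinct (walk_nodes s W)"
  shows "real (card {a\<in>set W. fst (snd a) = p}) - real (card {a\<in>set W. snd (snd a) = p})
         = of_bool (p = s) - of_bool (p = t)"
  using assms
proof (induction W arbitrary: s)
  case (Cons a W)
  let ?q = "snd (snd a)"
  have walk: "fst (snd a) = s" "is_walk ?q W t" using Cons.prems(1) by simp_all
  have s_new: "s \<notin> set (walk_nodes ?q W)" using Cons.prems(2) by simp
  then have avoid_s: "fst (snd b) \<noteq> s \<and> snd (snd b) \<noteq> s" if "b \<in> set W" for b
    using is_walk_tail_in_nodes[OF walk(2) that] that by auto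
  then have "a \<notin> set W" using walk(1) by blast
  have split: "card {b\<in>set (a # W). R b} = of_bool (R a) + card {b\<in>set W. R b}" for R
  proof -
    have "{b\<in>set (a # W). R b} = (if R a then insert a {b\<in>set W. R b} else {b\<in>set W. R b})"
      by auto
    then show ?thesis using \<open>a \<notin> set W\<close> by simp
  qed
  show ?case
    unfolding split using Cons.IH[OF walk(2)] Cons.prems(2) walk(1) avoid_s s_new
    by (cases "p = s") auto
qed simp

lemma walk_time_bound:
  fixes c :: "('a \<times> nat) \<times> ('a \<times> nat) \<Rightarrow> real"
  assumes "is_walk s W t"
    and "\<And>e. (True, e) \<in> set W \<Longrightarrow> real (snd (fst e)) + c e \<le> real (snd (snd e))"
    and "\<And>e. (False, e) \<in> set W \<Longrightarrow> snd (fst e) \<le> snd (snd e)"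
    and "\<And>e. 0 \<le> c e"
  shows "real (snd s) + (\<Sum>e\<in>{e. (True, e) \<in> set W}. c e) \<le> real (snd t)"
  using assms(1-3)
proof (induction W arbitrary: s)
  case (Cons a W)
  obtain l e where a: "a = (l, e)" by (cases a)
  have IH: "real (snd (snd e)) + (\<Sum>e\<in>{e. (True, e) \<in> set W}. c e) \<le> real (snd t)"
    using Cons a by simp
  have "(\<Sum>e'\<in>{e'. (True, e') \<in> set (a # W)}. c e')
        \<le> of_bool l * c e + (\<Sum>e\<in>{e. (True, e) \<in> set W}. c e)"
  proof (cases l)
    case True
    then have "{e'. (True, e') \<in> set (a # W)} = insert e {e. (True, e) \<in> set W}" using a by auto
    then show ?thesis using True assms(4)[of e] by (simp add: sum.insert_if finite_labelled)
  next
    case False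
    then have "{e'. (True, e') \<in> set (a # W)} = {e. (True, e) \<in> set W}" using a by auto
    then show ?thesis using False by simp
  qed
  moreover have "real (snd s) + of_bool l * c e \<le> real (snd (snd e))"
  proof -
    have "fst e = s" using Cons.prems(1) a by simp
    then show ?thesis
      using Cons.prems(2)[of e] Cons.prems(3)[of e] a by (cases l) auto
  qed
  ultimately show ?case using IH by linarith
qed simp

lemma sum_tagged_indicator:
  assumes "finite A" "finite B" "set W \<subseteq> Pair True ` A \<union> Pair False ` B"
  shows "(\<Sum>e\<in>{e\<in>A. Q e}. of_bool ((True, e) \<in> set W)) +
         (\<Sum>e\<in>{e\<in>B. Q e}. of_bool ((False, e) \<in> set W)) = real (card {a\<in>set W. Q (snd a)})"
proof -
  define T where "T l = {e. (l, e) \<in> set W \<and> Q e}" for l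
  have "{e\<in>A. Q e} \<inter> {e. (True, e) \<in> set W} = T True"
    "{e\<in>B. Q e} \<inter> {e. (False, e) \<in> set W} = T False"
    using assms(3) unfolding T_def by auto
  then have "(\<Sum>e\<in>{e\<in>A. Q e}. of_bool ((True, e) \<in> set W)) +
      (\<Sum>e\<in>{e\<in>B. Q e}. of_bool ((False, e) \<in> set W)) = real (card (T True) + card (T False))"
    using assms(1,2) by simp
  also have "card (T True) + card (T False) = card (Pair True ` T True \<union> Pair False ` T False)"
    using finite_labelled[of _ W] unfolding T_def
    by (subst card_Un_disjoint) (auto simp: card_image inj_on_def)
  also have "Pair True ` T True \<union> Pair False ` T False = {a\<in>set W. Q (snd a)}"
  proof (rule set_eqI)
    fix a :: "bool \<times> 'a"
    obtain l e where "a = (l, e)" by (cases a)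
    then show "a \<in> Pair True ` T True \<union> Pair False ` T False \<longleftrightarrow> a \<in> {a\<in>set W. Q (snd a)}"
      unfolding T_def by (cases l) auto
  qed
  finally show ?thesis .
qed

section \<open>Decomposing a binary unit flow\<close>

definition unit_support :: "'e set \<Rightarrow> 'e set \<Rightarrow> ('e \<Rightarrow> real) \<Rightarrow> ('e \<Rightarrow> real) \<Rightarrow> (bool \<times> 'e) set" where
  "unit_support Em Fh xm xh = Pair True ` {e\<in>Em. xm e = 1} \<union> Pair False ` {e\<in>Fh. xh e = 1}"

lemma outflow_nonneg:
  assumes "\<forall>e\<in>Em. 0 \<le> xm e" "\<forall>e\<in>Fh. 0 \<le> xh e"
  shows "0 \<le> outflow Em Fh xm xh p"
  unfolding outflow_def using assms by (intro add_nonneg_nonneg sum_nonneg) auto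

lemma outflow_ge_one:
  assumes "finite Em" "finite Fh" "\<forall>e\<in>Em. 0 \<le> xm e" "\<forall>e\<in>Fh. 0 \<le> xh e"
    and "a \<in> unit_support Em Fh xm xh"
  shows "1 \<le> outflow Em Fh xm xh (fst (snd a))"
proof -
  let ?out_m = "\<lambda>p. \<Sum>e\<in>{e\<in>Em. fst e = p}. xm e" and ?out_h = "\<lambda>p. \<Sum>e\<in>{e\<in>Fh. fst e = p}. xh e"
  have nonneg: "0 \<le> ?out_m p" "0 \<le> ?out_h p" for p
    using assms(3,4) by (auto intro: sum_nonneg)
  from assms(5) consider (move) e where "a = (True, e)" "e \<in> Em" "xm e = 1"
    | (hold) e where "a = (False, e)" "e \<in> Fh" "xh e = 1"
    unfolding unit_support_def by blast
  then show ?thesis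
  proof cases
    case move
    then have "xm e \<le> ?out_m (fst e)" using assms(1,3) by (intro member_le_sum) auto
    then show ?thesis using move nonneg unfolding outflow_def by (simp add: add_increasing2)
  next
    case hold
    then have "xh e \<le> ?out_h (fst e)" using assms(2,4) by (intro member_le_sum) auto
    then show ?thesis using hold nonneg unfolding outflow_def by (simp add: add_increasing)
  qed
qed

lemma inflow_nonzero_support:
  assumes "inflow Em Fh xm xh q \<noteq> 0" "\<forall>e\<in>Em. xm e \<in> {0, 1}" "\<forall>e\<in>Fh. xh e \<in> {0, 1}"
  shows "\<exists>a\<in>unit_support Em Fh xm xh. snd (snd a) = q"
proof -
  from assms(1) consider "(\<Sum>e\<in>{e\<in>Em. snd e = q}. xm e) \<noteq> 0" | "(\<Sum>e\<in>{e\<in>Fh. snd e = q}. xh e) \<noteq> 0"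
    unfolding inflow_def by force
  then show ?thesis
  proof cases
    case 1
    then obtain e where e: "e \<in> {e\<in>Em. snd e = q}" "xm e \<noteq> 0"
      by (rule sum.not_neutral_contains_not_neutral)
    then have "(True, e) \<in> unit_support Em Fh xm xh"
      using assms(2) unfolding unit_support_def by auto
    with e(1) show ?thesis by (intro bexI[of _ "(True, e)"]) auto
  next
    case 2
    then obtain e where e: "e \<in> {e\<in>Fh. snd e = q}" "xh e \<noteq> 0"
      by (rule sum.not_neutral_contains_not_neutral)
    then have "(False, e) \<in> unit_support Em Fh xm xh"
      using assms(3) unfolding unit_support_def by auto
    with e(1) show ?thesis by (intro bexI[of _ "(False, e)"]) auto
  qed
qed

text \<open>Trace arcs of value 1 backwards from the sink: time decreases along the way, and by
  conservation every node reached other than the source has an incoming arc of value 1.\<close>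
lemma unit_flow_walk:
  fixes Em Fh :: "'n tarc set" and xm xh :: "'n tarc \<Rightarrow> real"
  assumes finite: "finite Em" "finite Fh"
    and increasing: "\<forall>e\<in>Em \<union> Fh. snd (fst e) < snd (snd e)"
    and binary: "\<forall>e\<in>Em. xm e \<in> {0, 1}" "\<forall>e\<in>Fh. xh e \<in> {0, 1}"
    and tails: "\<forall>e\<in>Em \<union> Fh. fst e \<in> V"
    and conservation: "\<forall>p\<in>V. outflow Em Fh xm xh p - inflow Em Fh xm xh p
                                = of_bool (p = s) - of_bool (p = t)"
    and "t \<in> V"
  shows "\<exists>W. is_walk s W t \<and> set W \<subseteq> unit_support Em Fh xm xh"
proof -
  have nonneg: "\<forall>e\<in>Em. 0 \<le> xm e" "\<forall>e\<in>Fh. 0 \<le> xh e" using binary by auto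
  have "\<exists>W. is_walk s W q \<and> set W \<subseteq> unit_support Em Fh xm xh"
    if "q = s \<or> inflow Em Fh xm xh q \<noteq> 0" for q
    using that
  proof (induction "snd q" arbitrary: q rule: less_induct)
    case less
    show ?case
    proof (cases "q = s")
      case True
      then show ?thesis by (intro exI[of _ "[]"]) simp
    next
      case False
      then obtain a where a: "a \<in> unit_support Em Fh xm xh" "snd (snd a) = q"
        using less.prems inflow_nonzero_support binary by blast
      let ?p = "fst (snd a)"
      have "snd a \<in> Em \<union> Fh" using a(1) unfolding unit_support_def by auto
      then have earlier: "snd ?p < snd q" and "?p \<in> V" using increasing tails a(2) by auto
      have "inflow Em Fh xm xh ?p \<noteq> 0" if "?p \<noteq> s"
      proof -
        have "outflow Em Fh xm xh ?p - inflow Em Fh xm xh ?p \<le> 0"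
          using conservation \<open>?p \<in> V\<close> that by simp
        then show ?thesis using outflow_ge_one[OF finite nonneg a(1)] by linarith
      qed
      then obtain W where W: "is_walk s W ?p" "set W \<subseteq> unit_support Em Fh xm xh"
        using less.hyps[OF earlier] by blast
      have "is_walk s (W @ [a]) q"
        unfolding is_walk_append using W(1) a(2) by (intro exI[of _ ?p]) simp
      with W(2) a(1) show ?thesis by (intro exI[of _ "W @ [a]"]) auto
    qed
  qed
  moreover have "inflow Em Fh xm xh t \<noteq> 0" if "t \<noteq> s"
  proof -
    have "outflow Em Fh xm xh t - inflow Em Fh xm xh t = -1"
      using conservation \<open>t \<in> V\<close> that by simp
    then show ?thesis using outflow_nonneg[OF nonneg, of t] by linarith
  qed
  ultimately show ?thesis by blast
qed

section \<open>Rounding down to the partial network\<close>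

text \<open>GREATEST over an empty set is unspecified, hence the hypothesis (x, 0) \<in> S below;
  (P1') provides it for every node of G.\<close>
definition latest_time :: "('a \<times> nat) set \<Rightarrow> 'a \<Rightarrow> nat \<Rightarrow> nat" where
  "latest_time S x t = (GREATEST r. r \<le> t \<and> (x, r) \<in> S)"

lemma latest_latest_time:
  assumes "(x, 0) \<in> S"
  shows "latest S x t (latest_time S x t)"
proof -
  have "latest_time S x t \<le> t \<and> (x, latest_time S x t) \<in> S"
    unfolding latest_time_def by (rule GreatestI_nat[of _ 0 t]) (use assms in auto)
  moreover have "r \<le> latest_time S x t" if "(x, r) \<in> S" "r \<le> t" for r
    unfolding latest_time_def by (rule Greatest_le_nat[of _ r t]) (use that in auto)
  ultimately show ?thesis unfolding latest_def by auto
qed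

lemma latest_unique: "latest S x t t1 \<Longrightarrow> latest S x t t2 \<Longrightarrow> t1 = t2"
  unfolding latest_def by (meson le_antisym)

lemma latest_time_eq: "(x, t) \<in> S \<Longrightarrow> latest_time S x t = t"
  unfolding latest_time_def by (rule Greatest_equality) auto

lemma latest_time_mono: "(x, 0) \<in> S \<Longrightarrow> a \<le> b \<Longrightarrow> latest_time S x a \<le> latest_time S x b"
  using latest_latest_time[of x S a] latest_latest_time[of x S b] unfolding latest_def by auto

definition round_down :: "('a \<times> nat) set \<Rightarrow> 'a \<times> nat \<Rightarrow> 'a \<times> nat" where
  "round_down S p = (fst p, latest_time S (fst p) (snd p))"

lemma holdover_walk:
  assumes "(x, a) \<in> VS" "(x, b) \<in> VS" "a \<le> b"
  shows "\<exists>W. is_walk (x, a) W (x, b) \<and> set W \<subseteq> Pair False ` {e\<in>FS VS. fst (fst e) = x}"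
  using assms
proof (induction "b - a" arbitrary: a rule: less_induct)
  case less
  show ?case
  proof (cases "a = b")
    case True
    then show ?thesis by (intro exI[of _ "[]"]) simp
  next
    case False
    then have later: "a < b \<and> (x, b) \<in> VS" using less.prems by simp
    define a' where "a' = (LEAST s. a < s \<and> (x, s) \<in> VS)"
    have a': "a < a' \<and> (x, a') \<in> VS" unfolding a'_def by (rule LeastI[of _ b]) (rule later)
    have "a' \<le> b" unfolding a'_def by (rule Least_le) (rule later)
    have "(x, s) \<notin> VS" if "a < s" "s < a'" for s
      using not_less_Least[of s] that unfolding a'_def by blast
    then have hold: "((x, a), (x, a')) \<in> FS VS" unfolding FS_def using a' less.prems(1) by blast
    obtain W where "is_walk (x, a') W (x, b)" "set W \<subseteq> Pair False ` {e\<in>FS VS. fst (fst e) = x}"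
      using less.hyps[of a'] a' \<open>a' \<le> b\<close> later by force
    with hold show ?thesis by (intro exI[of _ "(False, ((x, a), (x, a'))) # W"]) auto
  qed
qed

text \<open>The rounding of a movement arc ((x, t), (z, t + \<tau>)) of G_T: its tail goes down to the
  latest copy of x in VS, and its head is then the one that (P2') prescribes.\<close>
fun project_arc :: "('n, 'k, 'z) sndrr_scheme \<Rightarrow> 'n tnode set \<Rightarrow> 'n tarc \<Rightarrow> 'n tarc" where
  "project_arc I VS ((x, t), (z, _)) =
     ((x, latest_time VS x t), (z, latest_time VS z (latest_time VS x t + gtau I (x, z))))"

lemma uarc_project_arc: "uarc (project_arc I VS e) = uarc e"
  by (cases "(I, VS, e)" rule: project_arc.cases) (simp add: uarc_def)

lemma calET_disjoint: "e \<in> calET P b1 \<Longrightarrow> e \<in> calET P b2 \<Longrightarrow> b1 = b2"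
  unfolding calET_def by (cases b1, cases b2) (auto split: prod.splits simp: copies_def)

section \<open>Walks of the full network rounded into the partial one\<close>

locale partial_network_setting =
  fixes I :: "('n, 'k) sndrr" and P :: "'n part" and VS :: "'n tnode set" and ES :: "'n tarc set"
  assumes snd_inst: "snd_instance I" and valid: "valid_partition I P"
    and partial: "partial_network I P VS ES" and P1: "P1' I P VS" and P2: "P2' I P VS ES"
begin

lemma arcs_subset: "arcs I \<subseteq> nodes I \<times> nodes I"
  using snd_inst unfolding snd_instance_def by auto

lemma tau_pos: "(v, w) \<in> arcs I \<Longrightarrow> 0 < tau I (v, w)"
  using snd_inst unfolding snd_instance_def by auto

lemma dl_le_horizon: "k \<in> comms I \<Longrightarrow> dl I k \<le> horizon I"
  using snd_inst unfolding horizon_def snd_instance_def by auto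

lemma part_subset: "v \<in> nodes I \<Longrightarrow> X \<in> P v \<Longrightarrow> X \<subseteq> outarcs (arcs I) v"
  using valid unfolding valid_partition_def partition_on_def by auto

lemma part_unique:
  "v \<in> nodes I \<Longrightarrow> X1 \<in> P v \<Longrightarrow> X2 \<in> P v \<Longrightarrow> e \<in> X1 \<Longrightarrow> e \<in> X2 \<Longrightarrow> X1 = X2"
  using valid unfolding valid_partition_def partition_on_def disjoint_def by blast

lemma finite_VT: "finite (VT I P)"
proof -
  have "finite (nodes I)" using snd_inst unfolding snd_instance_def by simp
  then have "finite (arcs I)" using arcs_subset finite_subset by blast
  have "finite (P v)" if "v \<in> nodes I" for v
  proof (rule finite_subset)
    show "P v \<subseteq> Pow (outarcs (arcs I) v)" using part_subset[OF that] by auto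
    show "finite (Pow (outarcs (arcs I) v))" using \<open>finite (arcs I)\<close> by (simp add: outarcs_def)
  qed
  with \<open>finite (nodes I)\<close> show ?thesis unfolding VT_def Vaux_def copies_def by auto
qed

lemma Eaux_arc: "(x, z) \<in> Eaux I P \<Longrightarrow> (fst x, fst z) \<in> arcs I"
  using part_subset unfolding Eaux_def outarcs_def by fastforce

lemma Eaux_subset: "Eaux I P \<subseteq> Vaux I P \<times> Vaux I P"
proof
  fix e assume "e \<in> Eaux I P"
  then obtain v X z where e: "e = ((v, Some X), z)" "v \<in> nodes I" "X \<in> P v" "z \<in> copies P (fst z)"
    and "(v, fst z) \<in> arcs I"
    using Eaux_arc unfolding Eaux_def by fastforce
  then have "fst z \<in> nodes I" using arcs_subset by auto
  with e show "e \<in> Vaux I P \<times> Vaux I P" unfolding Vaux_def copies_def by auto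
qed

lemma Vk_subset: "k \<in> comms I \<Longrightarrow> Vk I P k \<subseteq> Vaux I P"
  using snd_inst unfolding Vk_def Vaux_def copies_def snd_instance_def by blast

lemma copy_at_zero: "x \<in> Vaux I P \<Longrightarrow> (x, 0) \<in> VS"
  using P1 unfolding P1'_def Vaux_def by auto

lemma finite_timed_arcs: "A \<subseteq> VT I P \<times> VT I P \<Longrightarrow> finite A"
  using finite_VT finite_subset by blast

lemma finite_ET: "finite (ET I P)"
  by (rule finite_timed_arcs) (use Eaux_subset in \<open>auto simp: ET_def VT_def\<close>)

lemma EkT_subset_ET: "EkT I P k \<subseteq> ET I P"
  unfolding EkT_def ET_def Ek_def by blast

lemma finite_EkT: "finite (EkT I P k)"
  using finite_ET EkT_subset_ET finite_subset by blast

lemma finite_FkT: "k \<in> comms I \<Longrightarrow> finite (FkT I P k)"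
  by (rule finite_timed_arcs) (use Vk_subset in \<open>auto simp: FkT_def VT_def\<close>)

lemma finite_ES: "finite ES"
proof (rule finite_timed_arcs, rule subsetI)
  fix e assume "e \<in> ES"
  then obtain x z t t' where "e = ((x, t), (z, t'))" "(x, t) \<in> VT I P" "(x, z) \<in> Eaux I P"
      "t' \<le> t + gtau I (x, z)" "t + gtau I (x, z) \<le> horizon I"
    using partial unfolding partial_network_def by blast
  then show "e \<in> VT I P \<times> VT I P" using Eaux_subset unfolding VT_def by auto
qed

lemma finite_FS: "finite (FS VS)"
  by (rule finite_timed_arcs) (use partial in \<open>auto simp: FS_def partial_network_def\<close>)

lemma finite_calET:
  assumes "b \<in> AT I"
  shows "finite (calET P b)"
proof (rule finite_timed_arcs)
  obtain v w t where b: "b = ((v, t), (w, t + tau I (v, w)))" "(v, w) \<in> arcs I"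
      "t + tau I (v, w) \<le> horizon I"
    using assms unfolding AT_def by blast
  then have "v \<in> nodes I" "w \<in> nodes I" using arcs_subset by auto
  then show "calET P b \<subseteq> VT I P \<times> VT I P"
    using b(3) unfolding b(1) calET_def VT_def Vaux_def by (auto simp: copies_def)
qed

lemma finite_D_timed_arcs:
  "A \<subseteq> (nodes I \<times> {0..horizon I}) \<times> (nodes I \<times> {0..horizon I}) \<Longrightarrow> finite A"
  by (erule finite_subset) (use snd_inst in \<open>simp add: snd_instance_def\<close>)

lemma finite_AT: "finite (AT I)"
  by (rule finite_D_timed_arcs) (use arcs_subset in \<open>auto simp: AT_def\<close>)

lemma finite_AS: "finite (AS I P VS)"
proof (rule finite_D_timed_arcs, rule subsetI)
  fix a assume "a \<in> AS I P VS"
  then obtain v w t t' where "a = ((v, t), (w, t'))" "(v, w) \<in> arcs I"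
      "t + tau I (v, w) \<le> horizon I" "t' \<le> t + tau I (v, w)"
    unfolding AS_def latest_def by blast
  then show "a \<in> (nodes I \<times> {0..horizon I}) \<times> (nodes I \<times> {0..horizon I})"
    using arcs_subset by auto
qed

lemma finite_EkS: "finite (EkS I P ES k)"
  using finite_ES unfolding EkS_def by simp

lemma finite_FkS: "finite (FkS I P VS k)"
  using finite_FS unfolding FkS_def by simp

lemma finite_calES: "finite (calES P ES a)"
  using finite_ES unfolding calES_def by (cases a) auto

definition Sk_arcs :: "'k \<Rightarrow> 'n tarc set \<Rightarrow> (bool \<times> 'n tarc) set" where
  "Sk_arcs k M = Pair True ` (EkS I P ES k \<inter> project_arc I VS ` M) \<union> Pair False ` FkS I P VS k"

lemma project_arc_in_EkS:
  assumes "e \<in> EkT I P k"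
  shows "project_arc I VS e \<in> EkS I P ES k"
proof -
  obtain x z t where e: "e = ((x, t), (z, t + gtau I (x, z)))" "(x, z) \<in> Ek I P k"
      "t + gtau I (x, z) \<le> horizon I"
    using assms unfolding EkT_def by blast
  have xz: "(x, z) \<in> Eaux I P" using e(2) unfolding Ek_def by simp
  then have "(x, 0) \<in> VS" "(z, 0) \<in> VS" using Eaux_subset by (blast intro: copy_at_zero)+
  define t1 where "t1 = latest_time VS x t"
  have "(x, t1) \<in> VS" "t1 \<le> t"
    using latest_latest_time[OF \<open>(x, 0) \<in> VS\<close>] unfolding t1_def latest_def by auto
  moreover have "latest VS z (t1 + gtau I (x, z)) (latest_time VS z (t1 + gtau I (x, z)))"
    using latest_latest_time[OF \<open>(z, 0) \<in> VS\<close>] .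
  ultimately have "((x, t1), (z, latest_time VS z (t1 + gtau I (x, z)))) \<in> ES"
    using P2 xz e(3) unfolding P2'_def by fastforce
  then show ?thesis using e(1,2) unfolding EkS_def t1_def by simp
qed

lemma holdover_walk_Sk:
  assumes "k \<in> comms I" "x \<in> Vk I P k" "a \<le> b"
  shows "\<exists>W. is_walk (round_down VS (x, a)) W (round_down VS (x, b)) \<and>
             set W \<subseteq> Pair False ` FkS I P VS k"
proof -
  have x0: "(x, 0) \<in> VS" using assms(1,2) Vk_subset copy_at_zero by blast
  then have "(x, latest_time VS x a) \<in> VS" "(x, latest_time VS x b) \<in> VS"
    using latest_latest_time[OF x0] unfolding latest_def by blast+
  moreover have "latest_time VS x a \<le> latest_time VS x b" using latest_time_mono[OF x0 assms(3)] .
  ultimately obtain W where "is_walk (x, latest_time VS x a) W (x, latest_time VS x b)"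
      "set W \<subseteq> Pair False ` {e\<in>FS VS. fst (fst e) = x}"
    using holdover_walk by blast
  with assms(2) show ?thesis unfolding round_down_def FkS_def by (intro exI[of _ W]) auto
qed

lemma round_down_move_walk:
  assumes "k \<in> comms I" "e \<in> EkT I P k"
  shows "\<exists>W. is_walk (round_down VS (fst e)) W (round_down VS (snd e)) \<and> set W \<subseteq> Sk_arcs k {e}"
proof -
  obtain x z t where e: "e = ((x, t), (z, t + gtau I (x, z)))" "(x, z) \<in> Ek I P k"
    using assms(2) unfolding EkT_def by blast
  define t1 where "t1 = latest_time VS x t"
  have "x \<in> Vk I P k" "z \<in> Vk I P k" using e(2) unfolding Ek_def by simp_all
  then have "(x, 0) \<in> VS" using Vk_subset[OF assms(1)] copy_at_zero by blast
  then have "t1 \<le> t" using latest_latest_time[of x VS t] unfolding t1_def latest_def by simp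
  then obtain H where H: "is_walk (round_down VS (z, t1 + gtau I (x, z))) H
        (round_down VS (z, t + gtau I (x, z)))" "set H \<subseteq> Pair False ` FkS I P VS k"
    using holdover_walk_Sk[OF assms(1) \<open>z \<in> Vk I P k\<close>, of "t1 + gtau I (x, z)" "t + gtau I (x, z)"]
    by auto
  have "project_arc I VS e = (round_down VS (x, t), round_down VS (z, t1 + gtau I (x, z)))"
    unfolding e(1) round_down_def t1_def by simp
  then have "is_walk (round_down VS (fst e)) ((True, project_arc I VS e) # H)
      (round_down VS (snd e))"
    using H(1) unfolding e(1) by (simp add: round_down_def)
  moreover have "set ((True, project_arc I VS e) # H) \<subseteq> Sk_arcs k {e}"
    using project_arc_in_EkS[OF assms(2)] H(2) unfolding Sk_arcs_def by auto
  ultimately show ?thesis by blast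
qed

lemma round_down_arc_walk:
  assumes "k \<in> comms I" "a \<in> Pair True ` EkT I P k \<union> Pair False ` FkT I P k"
  shows "\<exists>W. is_walk (round_down VS (fst (snd a))) W (round_down VS (snd (snd a))) \<and>
             set W \<subseteq> Sk_arcs k {e. (True, e) = a}"
  using assms(2)
proof
  assume "a \<in> Pair True ` EkT I P k"
  then obtain e where a: "a = (True, e)" "e \<in> EkT I P k" by blast
  then show ?thesis using round_down_move_walk[OF assms(1) a(2)] by simp
next
  assume "a \<in> Pair False ` FkT I P k"
  then obtain x t where a: "a = (False, ((x, t), (x, t + 1)))" "x \<in> Vk I P k"
    unfolding FkT_def by blast
  then obtain W where W: "is_walk (round_down VS (x, t)) W (round_down VS (x, t + 1))"
      "set W \<subseteq> Pair False ` FkS I P VS k"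
    using holdover_walk_Sk[OF assms(1) a(2), of t "t + 1"] by auto
  moreover have "set W \<subseteq> Sk_arcs k {e. (True, e) = a}"
    using W(2) unfolding Sk_arcs_def by blast
  ultimately show ?thesis unfolding a(1) by auto
qed

lemma round_down_walk:
  assumes "k \<in> comms I" "is_walk s W t"
    and "set W \<subseteq> Pair True ` EkT I P k \<union> Pair False ` FkT I P k"
  shows "\<exists>W'. is_walk (round_down VS s) W' (round_down VS t) \<and>
              set W' \<subseteq> Sk_arcs k {e. (True, e) \<in> set W}"
proof -
  have arc_walks: "\<exists>V. is_walk (round_down VS (fst (snd a))) V (round_down VS (snd (snd a))) \<and>
             set V \<subseteq> Sk_arcs k {e. (True, e) = a}" if "a \<in> set W" for a
    by (rule round_down_arc_walk[OF assms(1)]) (use assms(3) that in blast)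
  have "\<exists>W'. is_walk (round_down VS s) W' (round_down VS t) \<and>
      set W' \<subseteq> (\<Union>a\<in>set W. Sk_arcs k {e. (True, e) = a})"
    by (rule is_walk_subdivide[OF assms(2) arc_walks])
  then obtain W' where W': "is_walk (round_down VS s) W' (round_down VS t)"
      "set W' \<subseteq> (\<Union>a\<in>set W. Sk_arcs k {e. (True, e) = a})"
    by blast
  have "(\<Union>a\<in>set W. Sk_arcs k {e. (True, e) = a}) \<subseteq> Sk_arcs k {e. (True, e) \<in> set W}"
    by (auto simp: Sk_arcs_def)
  with W'(2) have "set W' \<subseteq> Sk_arcs k {e. (True, e) \<in> set W}" by (rule order_trans)
  with W'(1) show ?thesis by blast
qed

lemma gtau_pos: "(x, z) \<in> Eaux I P \<Longrightarrow> 0 < gtau I (x, z)"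
  unfolding gtau_def using Eaux_arc tau_pos by simp

definition rounded_path :: "'k \<Rightarrow> 'n tarc set \<Rightarrow> (bool \<times> 'n tarc) list \<Rightarrow> bool" where
  "rounded_path k M W \<longleftrightarrow> is_walk (origc I P k, rel I k) W ((dest I k, None), dl I k) \<and>
     distinct (walk_nodes (origc I P k, rel I k) W) \<and> set W \<subseteq> Sk_arcs k M"

lemma unit_walk_T:
  assumes k: "k \<in> comms I" and feasible: "feasible_T I P (xm, xh, y)"
  shows "\<exists>W. is_walk (origc I P k, rel I k) W ((dest I k, None), dl I k) \<and>
             set W \<subseteq> unit_support (EkT I P k) (FkT I P k) (xm k) (xh k)"
proof (rule unit_flow_walk[OF finite_EkT finite_FkT[OF k]])
  have flow: "\<forall>p\<in>VkT I P k. outflow (EkT I P k) (FkT I P k) (xm k) (xh k) p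
        - inflow (EkT I P k) (FkT I P k) (xm k) (xh k) p = flowrhs I P k p"
    "\<forall>e. (e \<in> EkT I P k \<longrightarrow> xm k e \<in> {0, 1}) \<and> (e \<in> FkT I P k \<longrightarrow> xh k e \<in> {0, 1})"
    using feasible k unfolding feasible_T_def by auto
  then show "\<forall>p\<in>VkT I P k. outflow (EkT I P k) (FkT I P k) (xm k) (xh k) p
      - inflow (EkT I P k) (FkT I P k) (xm k) (xh k) p
      = of_bool (p = (origc I P k, rel I k)) - of_bool (p = ((dest I k, None), dl I k))"
    unfolding flowrhs_def by simp
  show "\<forall>e\<in>EkT I P k. xm k e \<in> {0, 1}" "\<forall>e\<in>FkT I P k. xh k e \<in> {0, 1}"
    using flow(2) by blast+
  show "\<forall>e\<in>EkT I P k \<union> FkT I P k. snd (fst e) < snd (snd e)"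
    using gtau_pos unfolding EkT_def FkT_def Ek_def by auto
  show "\<forall>e\<in>EkT I P k \<union> FkT I P k. fst e \<in> VkT I P k"
    unfolding EkT_def FkT_def VkT_def Ek_def by auto
  show "((dest I k, None), dl I k) \<in> VkT I P k"
    using dl_le_horizon[OF k] unfolding VkT_def Vk_def by auto
qed

lemma walk_T_transit_time:
  assumes "is_walk s W t" "set W \<subseteq> Pair True ` EkT I P k \<union> Pair False ` FkT I P k"
  shows "real (snd s) + (\<Sum>e\<in>{e. (True, e) \<in> set W}. real (tau I (uarc e))) \<le> real (snd t)"
proof (rule walk_time_bound[OF assms(1)])
  fix e assume "(True, e) \<in> set W"
  then have "e \<in> EkT I P k" using assms(2) by blast
  then show "real (snd (fst e)) + real (tau I (uarc e)) \<le> real (snd (snd e))"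
    unfolding EkT_def uarc_def gtau_def by auto
next
  fix e assume "(False, e) \<in> set W"
  then have "e \<in> FkT I P k" using assms(2) by blast
  then show "snd (fst e) \<le> snd (snd e)" unfolding FkT_def by auto
qed simp

lemma rounded_path_exists:
  assumes k: "k \<in> comms I" and feasible: "feasible_T I P (xm, xh, y)"
  shows "\<exists>M W. M \<subseteq> {e\<in>EkT I P k. xm k e = 1} \<and>
           (\<Sum>e\<in>M. real (tau I (uarc e))) \<le> real (dl I k) - real (rel I k) \<and> rounded_path k M W"
proof -
  define s where "s = (origc I P k, rel I k)"
  define t where "t = ((dest I k, None) :: 'n gnode, dl I k)"
  obtain W where W: "is_walk s W t" "set W \<subseteq> unit_support (EkT I P k) (FkT I P k) (xm k) (xh k)"
    using unit_walk_T[OF k feasible] unfolding s_def t_def by blast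
  then have arcs_W: "set W \<subseteq> Pair True ` EkT I P k \<union> Pair False ` FkT I P k"
    unfolding unit_support_def by blast
  define M where "M = {e. (True, e) \<in> set W}"
  have M: "M \<subseteq> {e\<in>EkT I P k. xm k e = 1}" using W(2) unfolding M_def unit_support_def by auto
  have time: "(\<Sum>e\<in>M. real (tau I (uarc e))) \<le> real (dl I k) - real (rel I k)"
    using walk_T_transit_time[OF W(1) arcs_W] unfolding M_def s_def t_def by simp
  have "s \<in> VS" "t \<in> VS" using P1 k unfolding P1'_def s_def t_def by auto
  then have "round_down VS s = s" "round_down VS t = t"
    unfolding round_down_def by (simp_all add: latest_time_eq)
  moreover have "\<exists>W'. is_walk (round_down VS s) W' (round_down VS t) \<and> set W' \<subseteq> Sk_arcs k M"
    unfolding M_def by (rule round_down_walk[OF k W(1) arcs_W])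
  ultimately obtain W' where W': "is_walk s W' t" "set W' \<subseteq> Sk_arcs k M" by auto
  obtain V where "set V \<subseteq> set W'" "is_walk s V t" "distinct (walk_nodes s V)"
    using is_walk_shortcut[OF W'(1)] by blast
  with W'(2) have "rounded_path k M V" unfolding rounded_path_def s_def t_def by auto
  with M time show ?thesis by blast
qed

fun fibre :: "'n darc \<Rightarrow> 'n darc set" where
  "fibre ((v, t), (w, _)) = {b\<in>AT I. fst (fst b) = v \<and> fst (snd b) = w \<and>
     (\<exists>X\<in>P v. (v, w) \<in> X \<and> latest_time VS (v, Some X) (snd (fst b)) = t)}"

lemma fibre_subset_AT: "fibre a \<subseteq> AT I"
  by (cases a rule: fibre.cases) auto

lemma fibre_same_arc: "b \<in> fibre a \<Longrightarrow> (fst (fst b), fst (snd b)) = (fst (fst a), fst (snd a))"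
  by (cases a rule: fibre.cases) auto

lemma fibres_disjoint:
  assumes "a1 \<in> AS I P VS" "a2 \<in> AS I P VS" "b \<in> fibre a1" "b \<in> fibre a2"
  shows "a1 = a2"
proof -
  obtain v t1 w t1' where a1: "a1 = ((v, t1), (w, t1'))"
      "latest (NS I P VS) w (t1 + tau I (v, w)) t1'"
    using assms(1) unfolding AS_def by blast
  obtain t2 t2' where a2: "a2 = ((v, t2), (w, t2'))"
      "latest (NS I P VS) w (t2 + tau I (v, w)) t2'"
    using assms(2,3,4) unfolding AS_def a1(1) by auto
  obtain X1 where X1: "X1 \<in> P v" "(v, w) \<in> X1" "latest_time VS (v, Some X1) (snd (fst b)) = t1"
    using assms(3) unfolding a1(1) by auto
  obtain X2 where X2: "X2 \<in> P v" "(v, w) \<in> X2" "latest_time VS (v, Some X2) (snd (fst b)) = t2"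
    using assms(4) unfolding a2(1) by auto
  have "b \<in> AT I" using assms(3) fibre_subset_AT by blast
  then have "(fst (fst b), fst (snd b)) \<in> arcs I" unfolding AT_def by auto
  then have "v \<in> nodes I" using fibre_same_arc[OF assms(3)] arcs_subset unfolding a1(1) by auto
  then have "X1 = X2" using part_unique X1(1,2) X2(1,2) by metis
  then have "t1 = t2" using X1(3) X2(3) by simp
  moreover have "t1' = t2'" using latest_unique[OF a1(2)] a2(2) \<open>t1 = t2\<close> by simp
  ultimately show ?thesis using a1(1) a2(1) by simp
qed

lemma project_arc_in_fibre:
  assumes "e \<in> EkT I P k" "project_arc I VS e \<in> calES P ES a"
  shows "\<exists>b\<in>fibre a. e \<in> calET P b"
proof -
  obtain x z t where e: "e = ((x, t), (z, t + gtau I (x, z)))" "(x, z) \<in> Ek I P k"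
      "t + gtau I (x, z) \<le> horizon I"
    using assms(1) unfolding EkT_def by blast
  obtain v X where x: "x = (v, Some X)" "X \<in> P v" "(v, fst z) \<in> X" "z \<in> copies P (fst z)"
    using e(2) unfolding Ek_def Eaux_def by blast
  have "(x, z) \<in> Eaux I P" using e(2) unfolding Ek_def by simp
  from Eaux_arc[OF this] have arc: "(v, fst z) \<in> arcs I" using x(1) by simp
  obtain w t' where a: "a = ((v, latest_time VS x t), (w, t'))" "(v, w) \<in> X" "z \<in> copies P w"
    using assms(2) x(1,2) part_unique unfolding e(1) calES_def by (cases a) auto
  have "fst z = w" using a(3) unfolding copies_def by auto
  define b where "b = ((v, t), (w, t + tau I (v, w)))"
  have "b \<in> AT I" using arc e(3) \<open>fst z = w\<close> unfolding b_def AT_def gtau_def x(1) by auto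
  then have "b \<in> fibre a" using a(2) x(1,2) unfolding a(1) b_def by auto
  moreover have "e \<in> calET P b"
    using x a(2,3) \<open>fst z = w\<close> unfolding e(1) b_def calET_def gtau_def by force
  ultimately show ?thesis by blast
qed

end

section \<open>A feasible solution of SND-RR(G_S) of no larger cost\<close>

lemma sum_le_sum_image:
  fixes g :: "'a \<Rightarrow> 'b::ordered_comm_monoid_add"
  assumes "finite M" "S \<subseteq> f ` M" "\<forall>e\<in>M. 0 \<le> g (f e)"
  shows "sum g S \<le> (\<Sum>e\<in>M. g (f e))"
proof -
  have "sum g S \<le> sum g (f ` M)"
    using assms by (intro sum_mono2) auto
  also have "\<dots> \<le> (\<Sum>e\<in>M. g (f e))"
    using sum_image_le[of M g f] assms(1,3) by (simp add: comp_def)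
  finally show ?thesis .
qed

locale full_solution = partial_network_setting I P VS ES
  for I :: "('n, 'k) sndrr" and P :: "'n part" and VS :: "'n tnode set" and ES :: "'n tarc set" +
  fixes xm xh :: "'k \<Rightarrow> 'n tarc \<Rightarrow> real" and y :: "'n darc \<Rightarrow> nat"
  assumes feasible: "feasible_T I P (xm, xh, y)"
begin

definition lifting :: "'k \<Rightarrow> 'n tarc set \<times> (bool \<times> 'n tarc) list" where
  "lifting k = (SOME (M, W). M \<subseteq> {e\<in>EkT I P k. xm k e = 1} \<and>
     (\<Sum>e\<in>M. real (tau I (uarc e))) \<le> real (dl I k) - real (rel I k) \<and> rounded_path k M W)"

definition T_moves :: "'k \<Rightarrow> 'n tarc set" where
  "T_moves k = fst (lifting k)"

definition S_path :: "'k \<Rightarrow> (bool \<times> 'n tarc) list" where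
  "S_path k = snd (lifting k)"

lemma lifting_spec:
  assumes "k \<in> comms I"
  shows "T_moves k \<subseteq> {e\<in>EkT I P k. xm k e = 1}"
    and "(\<Sum>e\<in>T_moves k. real (tau I (uarc e))) \<le> real (dl I k) - real (rel I k)"
    and "rounded_path k (T_moves k) (S_path k)"
proof -
  have "\<exists>MW. case MW of (M, W) \<Rightarrow> M \<subseteq> {e\<in>EkT I P k. xm k e = 1} \<and>
     (\<Sum>e\<in>M. real (tau I (uarc e))) \<le> real (dl I k) - real (rel I k) \<and> rounded_path k M W"
    using rounded_path_exists[OF assms feasible] by auto
  then have "case lifting k of (M, W) \<Rightarrow> M \<subseteq> {e\<in>EkT I P k. xm k e = 1} \<and>
     (\<Sum>e\<in>M. real (tau I (uarc e))) \<le> real (dl I k) - real (rel I k) \<and> rounded_path k M W"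
    unfolding lifting_def by (rule someI_ex)
  then show "T_moves k \<subseteq> {e\<in>EkT I P k. xm k e = 1}"
    and "(\<Sum>e\<in>T_moves k. real (tau I (uarc e))) \<le> real (dl I k) - real (rel I k)"
    and "rounded_path k (T_moves k) (S_path k)"
    unfolding T_moves_def S_path_def by (simp_all split: prod.splits)
qed

lemma finite_T_moves: "k \<in> comms I \<Longrightarrow> finite (T_moves k)"
  using finite_subset[OF lifting_spec(1)] finite_EkT by auto

lemma S_path_arcs: "k \<in> comms I \<Longrightarrow> set (S_path k) \<subseteq> Sk_arcs k (T_moves k)"
  using lifting_spec(3) unfolding rounded_path_def by simp

lemma xm_nonneg:
  assumes "k \<in> comms I"
  shows "0 \<le> xm k e"
proof -
  have "\<forall>k\<in>comms I. \<forall>e. (e \<in> EkT I P k \<longrightarrow> xm k e \<in> {0, 1}) \<and> (e \<notin> EkT I P k \<longrightarrow> xm k e = 0)"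
    using feasible unfolding feasible_T_def prod.case by blast
  then have "xm k e \<in> {0, 1}" using assms by (cases "e \<in> EkT I P k") blast+
  then show ?thesis by auto
qed

definition xm_S :: "'k \<Rightarrow> 'n tarc \<Rightarrow> real" where
  "xm_S k e = of_bool ((True, e) \<in> set (S_path k))"

definition xh_S :: "'k \<Rightarrow> 'n tarc \<Rightarrow> real" where
  "xh_S k e = of_bool ((False, e) \<in> set (S_path k))"

definition y_S :: "'n darc \<Rightarrow> nat" where
  "y_S a = (\<Sum>b\<in>fibre a. y b)"

lemma conservation_S:
  assumes "k \<in> comms I"
  shows "outflow (EkS I P ES k) (FkS I P VS k) (xm_S k) (xh_S k) p
         - inflow (EkS I P ES k) (FkS I P VS k) (xm_S k) (xh_S k) p = flowrhs I P k p"
proof -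
  have arcs: "set (S_path k) \<subseteq> Pair True ` EkS I P ES k \<union> Pair False ` FkS I P VS k"
    using S_path_arcs[OF assms] unfolding Sk_arcs_def by blast
  have "outflow (EkS I P ES k) (FkS I P VS k) (xm_S k) (xh_S k) p
      = real (card {a\<in>set (S_path k). fst (snd a) = p})"
    unfolding outflow_def xm_S_def xh_S_def
    by (rule sum_tagged_indicator[OF finite_EkS finite_FkS arcs])
  moreover have "inflow (EkS I P ES k) (FkS I P VS k) (xm_S k) (xh_S k) p
      = real (card {a\<in>set (S_path k). snd (snd a) = p})"
    unfolding inflow_def xm_S_def xh_S_def
    by (rule sum_tagged_indicator[OF finite_EkS finite_FkS arcs])
  moreover have "is_walk (origc I P k, rel I k) (S_path k) ((dest I k, None), dl I k)"
    "distinct (walk_nodes (origc I P k, rel I k) (S_path k))"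
    using lifting_spec(3)[OF assms] unfolding rounded_path_def by blast+
  note path_tails_minus_heads[OF this, of p]
  ultimately show ?thesis unfolding flowrhs_def by (simp add: of_bool_def)
qed

lemma sum_xm_S_le:
  assumes "k \<in> comms I" "finite Q" "\<forall>e\<in>T_moves k. 0 \<le> g (project_arc I VS e)"
  shows "(\<Sum>e\<in>Q. g e * xm_S k e)
         \<le> (\<Sum>e\<in>{e\<in>T_moves k. project_arc I VS e \<in> Q}. g (project_arc I VS e))"
proof -
  have "(\<Sum>e\<in>Q. g e * xm_S k e) = (\<Sum>e\<in>Q \<inter> {e. (True, e) \<in> set (S_path k)}. g e)"
    unfolding xm_S_def using assms(2) by simp
  also have "\<dots> \<le> (\<Sum>e\<in>{e\<in>T_moves k. project_arc I VS e \<in> Q}. g (project_arc I VS e))"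
  proof (rule sum_le_sum_image)
    show "finite {e\<in>T_moves k. project_arc I VS e \<in> Q}" using finite_T_moves[OF assms(1)] by simp
    show "Q \<inter> {e. (True, e) \<in> set (S_path k)}
          \<subseteq> project_arc I VS ` {e\<in>T_moves k. project_arc I VS e \<in> Q}"
      using S_path_arcs[OF assms(1)] unfolding Sk_arcs_def by blast
  qed (use assms(3) in simp)
  finally show ?thesis .
qed

lemma S_load_le_fibre_load:
  assumes "k \<in> comms I"
  shows "(\<Sum>e\<in>calES P ES a. xm_S k e) \<le> (\<Sum>b\<in>fibre a. \<Sum>e\<in>calET P b. xm k e)"
proof -
  let ?M = "{e\<in>T_moves k. project_arc I VS e \<in> calES P ES a}"
  have "(\<Sum>e\<in>calES P ES a. xm_S k e) = (\<Sum>e\<in>calES P ES a. 1 * xm_S k e)" by simp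
  also have "\<dots> \<le> (\<Sum>e\<in>?M. 1)"
    using sum_xm_S_le[OF assms finite_calES, of "\<lambda>_. 1"] by simp
  also have "\<dots> = (\<Sum>e\<in>?M. xm k e)"
    using lifting_spec(1)[OF assms] by (intro sum.cong) auto
  also have "\<dots> \<le> (\<Sum>e\<in>(\<Union>b\<in>fibre a. calET P b). xm k e)"
  proof (rule sum_mono2)
    show "finite (\<Union>b\<in>fibre a. calET P b)"
      using finite_subset[OF fibre_subset_AT finite_AT] fibre_subset_AT finite_calET by blast
    show "?M \<subseteq> (\<Union>b\<in>fibre a. calET P b)"
      using lifting_spec(1)[OF assms] project_arc_in_fibre by blast
  qed (rule xm_nonneg[OF assms])
  also have "\<dots> = (\<Sum>b\<in>fibre a. \<Sum>e\<in>calET P b. xm k e)"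
  proof (rule sum.UNION_disjoint)
    show "finite (fibre a)" using finite_subset[OF fibre_subset_AT finite_AT] .
    show "\<forall>b\<in>fibre a. finite (calET P b)" using fibre_subset_AT finite_calET by blast
    show "\<forall>b1\<in>fibre a. \<forall>b2\<in>fibre a. b1 \<noteq> b2 \<longrightarrow> calET P b1 \<inter> calET P b2 = {}"
      using calET_disjoint by blast
  qed
  finally show ?thesis .
qed

lemma capacity_S:
  "(\<Sum>k\<in>comms I. \<Sum>e\<in>calES P ES a. real (dem I k) * xm_S k e)
   \<le> real (cap I (fst (fst a), fst (snd a))) * real (y_S a)"
proof -
  have capacity_T: "\<forall>b\<in>AT I. (\<Sum>k\<in>comms I. \<Sum>e\<in>calET P b. real (dem I k) * xm k e)
      \<le> real (cap I (fst (fst b), fst (snd b))) * real (y b)"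
    using feasible unfolding feasible_T_def prod.case by blast
  have "(\<Sum>k\<in>comms I. \<Sum>e\<in>calES P ES a. real (dem I k) * xm_S k e)
      = (\<Sum>k\<in>comms I. real (dem I k) * (\<Sum>e\<in>calES P ES a. xm_S k e))"
    by (simp add: sum_distrib_left)
  also have "\<dots> \<le> (\<Sum>k\<in>comms I. real (dem I k) * (\<Sum>b\<in>fibre a. \<Sum>e\<in>calET P b. xm k e))"
    by (intro sum_mono mult_left_mono S_load_le_fibre_load) simp_all
  also have "\<dots> = (\<Sum>b\<in>fibre a. \<Sum>k\<in>comms I. \<Sum>e\<in>calET P b. real (dem I k) * xm k e)"
    by (simp add: sum_distrib_left sum.swap[of _ "comms I"])
  also have "\<dots> \<le> (\<Sum>b\<in>fibre a. real (cap I (fst (fst b), fst (snd b))) * real (y b))"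
    using capacity_T fibre_subset_AT by (intro sum_mono) blast
  also have "\<dots> = real (cap I (fst (fst a), fst (snd a))) * real (y_S a)"
    unfolding y_S_def using fibre_same_arc by (simp add: sum_distrib_left)
  finally show ?thesis .
qed

lemma transit_S:
  assumes "k \<in> comms I"
  shows "(\<Sum>e\<in>EkS I P ES k. real (tau I (uarc e)) * xm_S k e) \<le> real (dl I k) - real (rel I k)"
proof -
  have "(\<Sum>e\<in>EkS I P ES k. real (tau I (uarc e)) * xm_S k e)
      \<le> (\<Sum>e\<in>{e\<in>T_moves k. project_arc I VS e \<in> EkS I P ES k}. real (tau I (uarc e)))"
    using sum_xm_S_le[OF assms finite_EkS, of "\<lambda>e. real (tau I (uarc e))"]
    by (simp add: uarc_project_arc)
  also have "\<dots> \<le> (\<Sum>e\<in>T_moves k. real (tau I (uarc e)))"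
    using finite_T_moves[OF assms] by (intro sum_mono2) auto
  also have "\<dots> \<le> real (dl I k) - real (rel I k)" by (rule lifting_spec(2)[OF assms])
  finally show ?thesis .
qed

lemma feasible_S: "feasible_S I P VS ES (xm_S, xh_S, y_S)"
  unfolding feasible_S_def prod.case
proof (intro conjI ballI allI impI)
  fix k e assume "k \<in> comms I" "e \<notin> EkS I P ES k"
  then show "xm_S k e = 0" using S_path_arcs[of k] unfolding xm_S_def Sk_arcs_def by auto
next
  fix k e assume "k \<in> comms I" "e \<notin> FkS I P VS k"
  then show "xh_S k e = 0" using S_path_arcs[of k] unfolding xh_S_def Sk_arcs_def by auto
next
  fix k e
  show "xm_S k e \<in> {0, 1}" "xh_S k e \<in> {0, 1}" by (simp_all add: xm_S_def xh_S_def)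
qed (simp_all add: conservation_S capacity_S transit_S)

lemma fixed_cost_le:
  "(\<Sum>a\<in>AS I P VS. fcost I (fst (fst a), fst (snd a)) * real (y_S a))
   \<le> (\<Sum>b\<in>AT I. fcost I (fst (fst b), fst (snd b)) * real (y b))"
proof -
  have "(\<Sum>a\<in>AS I P VS. fcost I (fst (fst a), fst (snd a)) * real (y_S a))
      = (\<Sum>a\<in>AS I P VS. \<Sum>b\<in>fibre a. fcost I (fst (fst b), fst (snd b)) * real (y b))"
    unfolding y_S_def using fibre_same_arc by (simp add: sum_distrib_left)
  also have "\<dots> = (\<Sum>b\<in>(\<Union>a\<in>AS I P VS. fibre a). fcost I (fst (fst b), fst (snd b)) * real (y b))"
  proof (rule sum.UNION_disjoint[symmetric, OF finite_AS])
    show "\<forall>a\<in>AS I P VS. finite (fibre a)" using finite_subset[OF fibre_subset_AT finite_AT] by blast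
    show "\<forall>a1\<in>AS I P VS. \<forall>a2\<in>AS I P VS. a1 \<noteq> a2 \<longrightarrow> fibre a1 \<inter> fibre a2 = {}"
      using fibres_disjoint by blast
  qed
  also have "\<dots> \<le> (\<Sum>b\<in>AT I. fcost I (fst (fst b), fst (snd b)) * real (y b))"
  proof (rule sum_mono2[OF finite_AT])
    show "(\<Union>a\<in>AS I P VS. fibre a) \<subseteq> AT I" using fibre_subset_AT by blast
    show "0 \<le> fcost I (fst (fst b), fst (snd b)) * real (y b)"
      if "b \<in> AT I - (\<Union>a\<in>AS I P VS. fibre a)" for b
      using that snd_inst unfolding snd_instance_def AT_def by force
  qed
  finally show ?thesis .
qed

lemma movement_cost_le:
  assumes "k \<in> comms I"
  shows "(\<Sum>e\<in>ES. ucost I k (uarc e) * real (dem I k) * xm_S k e)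
         \<le> (\<Sum>e\<in>ET I P. ucost I k (uarc e) * real (dem I k) * xm k e)"
proof -
  have unit_cost_nonneg: "0 \<le> ucost I k (uarc e) * real (dem I k)" if "e \<in> ET I P" for e
  proof -
    have "uarc e \<in> arcs I" using that Eaux_arc unfolding ET_def uarc_def by auto
    then show ?thesis using snd_inst assms unfolding snd_instance_def by fastforce
  qed
  have moves: "T_moves k \<subseteq> ET I P" "\<forall>e\<in>T_moves k. xm k e = 1"
    using lifting_spec(1)[OF assms] EkT_subset_ET by auto
  have "\<forall>e\<in>T_moves k. 0 \<le> ucost I k (uarc (project_arc I VS e)) * real (dem I k)"
    using moves(1) unit_cost_nonneg by (auto simp: uarc_project_arc)
  from sum_xm_S_le[OF assms finite_ES this]
  have "(\<Sum>e\<in>ES. ucost I k (uarc e) * real (dem I k) * xm_S k e)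
      \<le> (\<Sum>e\<in>{e\<in>T_moves k. project_arc I VS e \<in> ES}. ucost I k (uarc e) * real (dem I k))"
    by (simp add: uarc_project_arc)
  also have "\<dots> \<le> (\<Sum>e\<in>T_moves k. ucost I k (uarc e) * real (dem I k))"
    using finite_T_moves[OF assms] moves(1) unit_cost_nonneg by (intro sum_mono2) auto
  also have "\<dots> = (\<Sum>e\<in>T_moves k. ucost I k (uarc e) * real (dem I k) * xm k e)"
    using moves(2) by simp
  also have "\<dots> \<le> (\<Sum>e\<in>ET I P. ucost I k (uarc e) * real (dem I k) * xm k e)"
    using finite_ET moves(1) unit_cost_nonneg xm_nonneg[OF assms]
    by (intro sum_mono2) auto
  finally show ?thesis .
qed

lemma cost_S_le: "cost_S I P VS ES (xm_S, xh_S, y_S) \<le> cost_T I P (xm, xh, y)"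
  unfolding cost_S_def cost_T_def prod.case
  using fixed_cost_le sum_mono[of "comms I", OF movement_cost_le] by (rule add_mono)

end

theorem theorem3:
  fixes I :: "('n, 'k) sndrr" and P :: "'n part"
    and VS :: "'n tnode set" and ES :: "'n tarc set"
  assumes "snd_instance I"
    and "valid_partition I P"
    and "partial_network I P VS ES"
    and "P1' I P VS"
    and "P2' I P VS ES"
  shows "opt_S I P VS ES \<le> opt_T I P"
  unfolding opt_S_def opt_T_def
proof (rule INF_mono)
  fix s assume "s \<in> {s. feasible_T I P s}"
  then obtain xm xh y where s: "s = (xm, xh, y)" and "feasible_T I P (xm, xh, y)"
    by (cases s) auto
  with assms interpret full_solution I P VS ES xm xh y
    by unfold_locales
  show "\<exists>s'\<in>{s. feasible_S I P VS ES s}. ereal (cost_S I P VS ES s') \<le> ereal (cost_T I P s)"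
    using feasible_S cost_S_le s by auto
qed

end
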